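(* Let $\mathcal{M}=(M_i\colon i\in K)$ be a family of matroids on a common ground set $E$ which admits a covering. Then for every nonempty family $(X_\alpha\colon\alpha<\kappa)$ of $\mathcal{M}$-tight sets, both $\bigcup_{\alpha<\kappa}X_\alpha$ and $\bigcap_{\alpha<\kappa}X_\alpha$ are $\mathcal{M}$-tight.
   Context: Matroids here are possibly infinite (given by independence axioms: $\emptyset$ independent, subsets of independent sets independent, the augmentation axiom relative to maximal independent sets, and that every independent subset of any $X\subseteq E$ extends to a maximal independent subset of $X$). Circuits are minimal dependent sets; $X$ spans $e$ in $M$ if $e\in X$ or some circuit $C\ni e$ has $C\setminus\{e\}\subseteq X$. For $X\subseteq E$, $M\restriction X=(X,\mathcal{I}\cap\mathcal{P}(X))$ and $\mathcal{M}\restriction X=(M_i\restriction X\colon i\in K)$. A covering of a family $(N_i\colon i\in K)$ of matroids on a set $Y$ is a family $(R_i\colon i\in K)$ with $R_i$ independent in $N_i$ and $\bigcup_i R_i=Y$. A family is tight if it admits a covering and in every covering each $R_i$ spans the whole ground set in $N_i$. A set $X\subseteq E$ is $\mathcal{M}$-tight if $\mathcal{M}\restriction X$ is tight. *)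

theory Defs
  imports Main
begin

text \<open>A (possibly infinite) matroid on ground set E, given by its set of independent sets.\<close>

definition max_indep_subset :: "'a set set \<Rightarrow> 'a set \<Rightarrow> 'a set \<Rightarrow> bool" where
  "max_indep_subset Ind X B \<longleftrightarrow>
     B \<subseteq> X \<and> B \<in> Ind \<and> (\<forall>B'. B \<subseteq> B' \<and> B' \<subseteq> X \<and> B' \<in> Ind \<longrightarrow> B' = B)"

definition matroid :: "'a set \<Rightarrow> 'a set set \<Rightarrow> bool" where
  "matroid E Ind \<longleftrightarrow>
     Ind \<subseteq> Pow E \<and>
     {} \<in> Ind \<and>
     (\<forall>I J. J \<in> Ind \<and> I \<subseteq> J \<longrightarrow> I \<in> Ind) \<and>
     (\<forall>I B. I \<in> Ind \<and> \<not> max_indep_subset Ind E I \<and> max_indep_subset Ind E B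
            \<longrightarrow> (\<exists>x \<in> B - I. insert x I \<in> Ind)) \<and>
     (\<forall>X I. X \<subseteq> E \<and> I \<in> Ind \<and> I \<subseteq> X \<longrightarrow> (\<exists>B. I \<subseteq> B \<and> max_indep_subset Ind X B))"

definition circuit :: "'a set \<Rightarrow> 'a set set \<Rightarrow> 'a set \<Rightarrow> bool" where
  "circuit Y Ind C \<longleftrightarrow> C \<subseteq> Y \<and> C \<notin> Ind \<and> (\<forall>C'. C' \<subset> C \<longrightarrow> C' \<in> Ind)"

definition spans :: "'a set \<Rightarrow> 'a set set \<Rightarrow> 'a set \<Rightarrow> 'a \<Rightarrow> bool" where
  "spans Y Ind S e \<longleftrightarrow> e \<in> S \<or> (\<exists>C. circuit Y Ind C \<and> e \<in> C \<and> C - {e} \<subseteq> S)"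

definition restr :: "'a set set \<Rightarrow> 'a set \<Rightarrow> 'a set set" where
  "restr Ind X = Ind \<inter> Pow X"

definition covering :: "'k set \<Rightarrow> ('k \<Rightarrow> 'a set set) \<Rightarrow> 'a set \<Rightarrow> ('k \<Rightarrow> 'a set) \<Rightarrow> bool" where
  "covering K J Y R \<longleftrightarrow> (\<forall>i \<in> K. R i \<in> J i) \<and> (\<Union>i \<in> K. R i) = Y"

definition tight :: "'k set \<Rightarrow> ('k \<Rightarrow> 'a set set) \<Rightarrow> 'a set \<Rightarrow> bool" where
  "tight K J Y \<longleftrightarrow> (\<exists>R. covering K J Y R) \<and>
     (\<forall>R. covering K J Y R \<longrightarrow> (\<forall>i \<in> K. \<forall>e \<in> Y. spans Y (J i) (R i) e))"

definition M_tight :: "'k set \<Rightarrow> ('k \<Rightarrow> 'a set set) \<Rightarrow> 'a set \<Rightarrow> bool" where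
  "M_tight K Ind X \<longleftrightarrow> tight K (\<lambda>i. restr (Ind i) X) X"

end

theory Submission
  imports Defs "HOL-Library.Disjoint_Sets"
begin

(* A family of matroids admitting a covering of Y is tight on Y exactly when every covering of Y
   is a partition: a repeated element can be deleted from one part, and a non-spanned element can
   be added to a part, and either move contradicts the other condition.

   For a union U of tight sets, two overlapping parts of a covering of U would still overlap in the
   restricted covering of some X_\<alpha>.

   For the intersection I, fix a covering S of U. For each i, S_i \<inter> I is a base of I in M_i:
   for x \<in> I outside S_i, every X_\<alpha> contains a circuit through x in S_i + x, and this circuit is
   unique, so it lies in I. An exchange argument then shows that R_i \<union> (S_i - I) is independent for
   every covering R of I, so these sets cover the tight set U; hence they are disjoint, and so are
   the R_i. *)

lemma max_indep_subsetD:
  assumes "max_indep_subset Ind X B"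
  shows "B \<subseteq> X" "B \<in> Ind" "\<And>B'. B \<subseteq> B' \<Longrightarrow> B' \<subseteq> X \<Longrightarrow> B' \<in> Ind \<Longrightarrow> B' = B"
  using assms unfolding max_indep_subset_def by blast+

lemma max_indep_subset_insert:
  assumes "max_indep_subset Ind X B" "x \<in> X" "insert x B \<in> Ind"
  shows "x \<in> B"
  using max_indep_subsetD[OF assms(1)] assms(2,3) by blast

lemma not_max_indep_subset:
  assumes "I \<subseteq> J" "J \<subseteq> X" "J \<in> Ind" "J \<noteq> I"
  shows "\<not> max_indep_subset Ind X I"
  using assms unfolding max_indep_subset_def by blast

lemma
  assumes "matroid E Ind"
  shows indep_subset_ground: "I \<in> Ind \<Longrightarrow> I \<subseteq> E"
    and indep_subset: "J \<in> Ind \<Longrightarrow> I \<subseteq> J \<Longrightarrow> I \<in> Ind"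
    and base_augment: "I \<in> Ind \<Longrightarrow> \<not> max_indep_subset Ind E I \<Longrightarrow> max_indep_subset Ind E B
      \<Longrightarrow> \<exists>x \<in> B - I. insert x I \<in> Ind"
    and indep_extend_max_indep_subset: "X \<subseteq> E \<Longrightarrow> I \<in> Ind \<Longrightarrow> I \<subseteq> X
      \<Longrightarrow> \<exists>B. I \<subseteq> B \<and> max_indep_subset Ind X B"
  using assms unfolding matroid_def by (meson PowD subsetD)+

lemma indep_union_diff_base:
  assumes M: "matroid E Ind" and "Y \<subseteq> E"
    and base: "max_indep_subset Ind E B" and BY: "max_indep_subset Ind Y (B \<inter> Y)"
    and P: "P \<in> Ind" "P \<subseteq> Y"
  shows "P \<union> (B - Y) \<in> Ind"
proof -
  note B = max_indep_subsetD[OF base]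
  have "P \<union> B \<subseteq> E" using P B(1) \<open>Y \<subseteq> E\<close> by auto
  then obtain Q where "P \<subseteq> Q" and mQ: "max_indep_subset Ind (P \<union> B) Q"
    using indep_extend_max_indep_subset[OF M _ P(1)] by blast
  note Q = max_indep_subsetD[OF mQ]
  have Q_base: "max_indep_subset Ind E Q"
  proof (rule ccontr)
    assume "\<not> ?thesis"
    then obtain x where "x \<in> B - Q" "insert x Q \<in> Ind"
      using base_augment[OF M Q(2) _ base] by blast
    then show False using max_indep_subset_insert[OF mQ] by blast
  qed
  show ?thesis
  proof (rule ccontr)
    assume dep: "P \<union> (B - Y) \<notin> Ind"
    \<comment> \<open>Then some z \<in> B - Y is missing from Q, so B0 is a proper independent subset of the base B
      and can be augmented from the base Q; the new element must come from P \<subseteq> Y.\<close>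
    have "\<not> B - Y \<subseteq> Q"
    proof
      assume "B - Y \<subseteq> Q"
      then have "P \<union> (B - Y) \<subseteq> Q" using \<open>P \<subseteq> Q\<close> by blast
      then show False using dep indep_subset[OF M Q(2)] by blast
    qed
    then obtain z where z: "z \<in> B - Y" "z \<notin> Q" by blast
    define B0 where "B0 = (B \<inter> Y) \<union> (Q \<inter> (B - Y))"
    have "B0 \<in> Ind" by (rule indep_subset[OF M B(2)]) (auto simp: B0_def)
    moreover have "\<not> max_indep_subset Ind E B0"
      using not_max_indep_subset[of B0 B E Ind] B z unfolding B0_def by blast
    ultimately obtain x where x: "x \<in> Q - B0" "insert x B0 \<in> Ind"
      using base_augment[OF M _ _ Q_base] by blast
    have "x \<in> Y" "x \<notin> B" using x(1) Q(1) P(2) unfolding B0_def by auto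
    moreover have "insert x (B \<inter> Y) \<in> Ind"
      by (rule indep_subset[OF M x(2)]) (auto simp: B0_def)
    ultimately show False using max_indep_subset_insert[OF BY] by blast
  qed
qed

lemma indep_union_diff:
  assumes M: "matroid E Ind" and "Y \<subseteq> E" and S: "S \<in> Ind"
    and SY: "max_indep_subset Ind Y (S \<inter> Y)" and P: "P \<in> Ind" "P \<subseteq> Y"
  shows "P \<union> (S - Y) \<in> Ind"
proof -
  obtain B where "S \<subseteq> B" and base: "max_indep_subset Ind E B"
    using indep_extend_max_indep_subset[OF M order_refl S indep_subset_ground[OF M S]] by blast
  have "B \<inter> Y \<in> Ind" by (rule indep_subset[OF M max_indep_subsetD(2)[OF base]]) blast
  then have "B \<inter> Y = S \<inter> Y"
    using max_indep_subsetD(3)[OF SY, of "B \<inter> Y"] \<open>S \<subseteq> B\<close> by blast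
  then have "max_indep_subset Ind Y (B \<inter> Y)" using SY by simp
  then have "P \<union> (B - Y) \<in> Ind" by (rule indep_union_diff_base[OF M \<open>Y \<subseteq> E\<close> base _ P])
  then show ?thesis by (rule indep_subset[OF M]) (use \<open>S \<subseteq> B\<close> in blast)
qed

text \<open>The augmentation axiom only compares with bases of E; this is its version relative to X.\<close>

lemma max_indep_subset_augment:
  assumes M: "matroid E Ind" and "X \<subseteq> E" and I: "I \<in> Ind" "I \<subseteq> X"
    and "\<not> max_indep_subset Ind X I" and mB: "max_indep_subset Ind X B"
  shows "\<exists>x \<in> B - I. insert x I \<in> Ind"
proof -
  note B = max_indep_subsetD[OF mB]
  obtain BE where "B \<subseteq> BE" and base: "max_indep_subset Ind E BE"
    using indep_extend_max_indep_subset[OF M order_refl B(2) indep_subset_ground[OF M B(2)]] by blast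
  have "BE \<inter> X = B"
  proof
    show "BE \<inter> X \<subseteq> B"
    proof
      fix y assume y: "y \<in> BE \<inter> X"
      have "insert y B \<in> Ind"
        by (rule indep_subset[OF M max_indep_subsetD(2)[OF base]]) (use y \<open>B \<subseteq> BE\<close> in blast)
      then show "y \<in> B" using max_indep_subset_insert[OF mB] y by blast
    qed
    show "B \<subseteq> BE \<inter> X" using \<open>B \<subseteq> BE\<close> B(1) by blast
  qed
  then have BEX: "max_indep_subset Ind X (BE \<inter> X)" using mB by simp
  obtain J where J: "I \<subseteq> J" "J \<subseteq> X" "J \<in> Ind" "J \<noteq> I"
    using \<open>\<not> max_indep_subset Ind X I\<close> I unfolding max_indep_subset_def by blast
  \<comment> \<open>Padding I and J with the part of BE outside X reduces the claim to the axiom for bases of E.\<close>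
  have I_pad: "I \<union> (BE - X) \<in> Ind" by (rule indep_union_diff_base[OF M \<open>X \<subseteq> E\<close> base BEX I])
  have J_pad: "J \<union> (BE - X) \<in> Ind" by (rule indep_union_diff_base[OF M \<open>X \<subseteq> E\<close> base BEX J(3,2)])
  have "\<not> max_indep_subset Ind E (I \<union> (BE - X))"
    by (rule not_max_indep_subset[OF _ _ J_pad]) (use J indep_subset_ground[OF M J_pad] in auto)
  then obtain x where "x \<in> BE - (I \<union> (BE - X))" "insert x (I \<union> (BE - X)) \<in> Ind"
    using base_augment[OF M I_pad _ base] by blast
  moreover have "insert x I \<in> Ind" by (rule indep_subset[OF M calculation(2)]) blast
  ultimately show ?thesis using \<open>BE \<inter> X = B\<close> by blast
qed

text \<open>If R is independent and insert e R is not, this is the unique circuit inside insert e R.\<close>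

definition fundamental_circuit :: "'a set set \<Rightarrow> 'a set \<Rightarrow> 'a \<Rightarrow> 'a set" where
  "fundamental_circuit Ind R e = insert e {f \<in> R. insert e (R - {f}) \<in> Ind}"

lemma fundamental_circuit_dependent:
  assumes M: "matroid E Ind" and R: "R \<in> Ind" and "e \<in> E" and dep: "insert e R \<notin> Ind"
  shows "fundamental_circuit Ind R e \<notin> Ind"
proof
  let ?C = "fundamental_circuit Ind R e"
  assume "?C \<in> Ind"
  have "insert e R \<subseteq> E" using \<open>e \<in> E\<close> indep_subset_ground[OF M R] by blast
  then obtain B where "?C \<subseteq> B" and mB: "max_indep_subset Ind (insert e R) B"
    using indep_extend_max_indep_subset[OF M _ \<open>?C \<in> Ind\<close>]
    unfolding fundamental_circuit_def by blast
  note B = max_indep_subsetD[OF mB]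
  have "e \<in> B" using \<open>?C \<subseteq> B\<close> unfolding fundamental_circuit_def by blast
  have "\<not> insert e R \<subseteq> B" using B(1,2) dep subset_antisym by metis
  then obtain f where f: "f \<in> R" "f \<notin> B" "f \<noteq> e" using \<open>e \<in> B\<close> by blast
  have "insert e (R - {f}) \<notin> Ind"
    using f \<open>?C \<subseteq> B\<close> unfolding fundamental_circuit_def by blast
  moreover have "B \<subseteq> insert e (R - {f})" using B(1) f(2) by blast
  ultimately have "\<not> insert e (R - {f}) \<subseteq> B" using B(2) subset_antisym by metis
  then obtain f' where f': "f' \<in> R" "f' \<noteq> f" "f' \<notin> B" using \<open>e \<in> B\<close> by blast
  \<comment> \<open>Exchanging e for f in B gives an independent subset of R that misses f', hence is not
    maximal in insert e R; augmenting it from B can only add e back, so insert f B is independent.\<close>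
  define I where "I = insert f (B - {e})"
  have "I \<subseteq> R" using B(1) f unfolding I_def by blast
  then have "I \<in> Ind" by (rule indep_subset[OF M R])
  moreover have "\<not> max_indep_subset Ind (insert e R) I"
    by (rule not_max_indep_subset[OF \<open>I \<subseteq> R\<close> _ R]) (use f' in \<open>auto simp: I_def\<close>)
  ultimately obtain x where x: "x \<in> B - I" "insert x I \<in> Ind"
    using max_indep_subset_augment[OF M \<open>insert e R \<subseteq> E\<close> _ _ _ mB] \<open>I \<subseteq> R\<close> by blast
  have "insert x I = insert f B" using x(1) \<open>e \<in> B\<close> unfolding I_def by blast
  then have "insert f B \<in> Ind" using x(2) by simp
  then show False using max_indep_subset_insert[OF mB] f by blast
qed

lemma circuit_fundamental_circuit:
  assumes M: "matroid E Ind" and R: "R \<in> Ind" and "e \<in> E" and dep: "insert e R \<notin> Ind"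
    and "insert e R \<subseteq> Y"
  shows "circuit Y Ind (fundamental_circuit Ind R e)"
  unfolding circuit_def
proof (intro conjI allI impI)
  show "fundamental_circuit Ind R e \<subseteq> Y"
    using \<open>insert e R \<subseteq> Y\<close> unfolding fundamental_circuit_def by blast
  show "fundamental_circuit Ind R e \<notin> Ind" by (rule fundamental_circuit_dependent[OF M R \<open>e \<in> E\<close> dep])
  fix C assume "C \<subset> fundamental_circuit Ind R e"
  then obtain g where g: "g \<in> fundamental_circuit Ind R e" "g \<notin> C" "C \<subseteq> insert e R"
    unfolding fundamental_circuit_def by blast
  show "C \<in> Ind"
  proof (cases "g = e")
    case True
    then have "C \<subseteq> R" using g by blast
    then show ?thesis by (rule indep_subset[OF M R])
  next
    case False
    then have "insert e (R - {g}) \<in> Ind" using g(1) unfolding fundamental_circuit_def by blast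
    moreover have "C \<subseteq> insert e (R - {g})" using g by blast
    ultimately show ?thesis by (rule indep_subset[OF M])
  qed
qed

lemma circuit_subset_insert_eq_fundamental_circuit:
  assumes M: "matroid E Ind" and R: "R \<in> Ind" and "e \<in> E"
    and D: "circuit Y Ind D" and "D \<subseteq> insert e R"
  shows "D = fundamental_circuit Ind R e"
proof -
  have "D \<notin> Ind" and D_min: "\<And>D'. D' \<subset> D \<Longrightarrow> D' \<in> Ind" using D unfolding circuit_def by blast+
  have "fundamental_circuit Ind R e \<subseteq> D"
  proof
    fix f assume f: "f \<in> fundamental_circuit Ind R e"
    show "f \<in> D"
    proof (rule ccontr)
      assume "f \<notin> D"
      then have D_sub: "D \<subseteq> insert e R - {f}" using \<open>D \<subseteq> insert e R\<close> by blast
      have "insert e R - {f} \<in> Ind"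
      proof (cases "f = e")
        case True
        show ?thesis by (rule indep_subset[OF M R]) (use True in blast)
      next
        case False
        then have "insert e R - {f} = insert e (R - {f})" by blast
        then show ?thesis using f False unfolding fundamental_circuit_def by auto
      qed
      then have "D \<in> Ind" by (rule indep_subset[OF M _ D_sub])
      with \<open>D \<notin> Ind\<close> show False by contradiction
    qed
  qed
  moreover have "fundamental_circuit Ind R e \<notin> Ind"
  proof (rule fundamental_circuit_dependent[OF M R \<open>e \<in> E\<close>])
    show "insert e R \<notin> Ind"
      using indep_subset[OF M _ \<open>D \<subseteq> insert e R\<close>] \<open>D \<notin> Ind\<close> by blast
  qed
  ultimately show ?thesis using D_min by blast
qed

lemma insert_dependent_imp_spans:
  assumes M: "matroid E Ind" and "Y \<subseteq> E" and R: "R \<in> Ind"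
    and dep: "insert e R \<notin> Ind" and "insert e R \<subseteq> Y"
  shows "spans Y Ind R e"
  unfolding spans_def
proof (intro disjI2 exI conjI)
  have "e \<in> E" using assms by blast
  show "circuit Y Ind (fundamental_circuit Ind R e)"
    by (rule circuit_fundamental_circuit[OF M R \<open>e \<in> E\<close> dep \<open>insert e R \<subseteq> Y\<close>])
  show "e \<in> fundamental_circuit Ind R e" "fundamental_circuit Ind R e - {e} \<subseteq> R"
    unfolding fundamental_circuit_def by blast+
qed

lemma circuit_restr: "circuit Y (restr Ind Y) C \<longleftrightarrow> circuit Y Ind C"
  unfolding circuit_def restr_def by auto

lemma spans_restr: "spans Y (restr Ind Y) S e \<longleftrightarrow> spans Y Ind S e"
  unfolding spans_def circuit_restr ..

lemma spans_mono: "spans Y Ind S e \<Longrightarrow> S \<subseteq> S' \<Longrightarrow> spans Y Ind S' e"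
  unfolding spans_def by blast

lemma max_indep_subset_Inter:
  assumes M: "matroid E Ind" and S: "S \<in> Ind" and "A \<noteq> {}" and sub: "\<forall>\<alpha> \<in> A. X \<alpha> \<subseteq> E"
    and spans: "\<And>\<alpha> x. \<alpha> \<in> A \<Longrightarrow> x \<in> X \<alpha> \<Longrightarrow> spans (X \<alpha>) Ind S x"
  shows "max_indep_subset Ind (\<Inter>\<alpha> \<in> A. X \<alpha>) (S \<inter> (\<Inter>\<alpha> \<in> A. X \<alpha>))"
  unfolding max_indep_subset_def
proof (intro conjI allI impI)
  let ?I = "\<Inter>\<alpha> \<in> A. X \<alpha>"
  show "S \<inter> ?I \<subseteq> ?I" by blast
  show "S \<inter> ?I \<in> Ind" by (rule indep_subset[OF M S]) blast
  fix B assume B: "S \<inter> ?I \<subseteq> B \<and> B \<subseteq> ?I \<and> B \<in> Ind"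
  have "B \<subseteq> S"
  proof
    fix x assume "x \<in> B"
    show "x \<in> S"
    proof (rule ccontr)
      assume "x \<notin> S"
      have "x \<in> E" using \<open>x \<in> B\<close> B \<open>A \<noteq> {}\<close> sub by blast
      have fc: "circuit (X \<alpha>) Ind (fundamental_circuit Ind S x)" if \<alpha>: "\<alpha> \<in> A" for \<alpha>
      proof -
        have "x \<in> X \<alpha>" using \<open>x \<in> B\<close> B \<alpha> by blast
        then obtain C where C: "circuit (X \<alpha>) Ind C" "x \<in> C" "C - {x} \<subseteq> S"
          using spans[OF \<alpha>] \<open>x \<notin> S\<close> unfolding spans_def by blast
        then have "C = fundamental_circuit Ind S x"
          by (intro circuit_subset_insert_eq_fundamental_circuit[OF M S \<open>x \<in> E\<close> C(1)]) blast
        then show ?thesis using C(1) by simp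
      qed
      then have "fundamental_circuit Ind S x \<subseteq> B"
        using B \<open>x \<in> B\<close> unfolding circuit_def fundamental_circuit_def by blast
      then have "fundamental_circuit Ind S x \<in> Ind" by (rule indep_subset[OF M, rotated]) (use B in blast)
      moreover have "fundamental_circuit Ind S x \<notin> Ind"
        using fc \<open>A \<noteq> {}\<close> unfolding circuit_def by blast
      ultimately show False by contradiction
    qed
  qed
  then show "B = S \<inter> ?I" using B by blast
qed

lemma restr_ground:
  assumes "matroid E Ind"
  shows "restr Ind E = Ind"
  unfolding restr_def using indep_subset_ground[OF assms] by blast

lemma covering_restr:
  assumes M: "\<forall>i \<in> K. matroid E (Ind i)"
    and R: "covering K (\<lambda>i. restr (Ind i) U) U R" and "Y \<subseteq> U"
  shows "covering K (\<lambda>i. restr (Ind i) Y) Y (\<lambda>i. R i \<inter> Y)"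
  unfolding covering_def
proof
  show "\<forall>i \<in> K. R i \<inter> Y \<in> restr (Ind i) Y"
  proof
    fix i assume "i \<in> K"
    then have "R i \<in> Ind i" using R unfolding covering_def restr_def by blast
    then have "R i \<inter> Y \<in> Ind i" by (rule indep_subset[of E, OF bspec[OF M \<open>i \<in> K\<close>]]) blast
    then show "R i \<inter> Y \<in> restr (Ind i) Y" unfolding restr_def by blast
  qed
  show "(\<Union>i \<in> K. R i \<inter> Y) = Y" using R \<open>Y \<subseteq> U\<close> unfolding covering_def by blast
qed

lemma covering_ground:
  assumes M: "\<forall>i \<in> K. matroid E (Ind i)" and "covering K Ind E R"
  shows "covering K (\<lambda>i. restr (Ind i) E) E R"
  using assms restr_ground[of E] unfolding covering_def by simp

lemma covering_remove_duplicate: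
  assumes down_closed: "\<And>i S T. i \<in> K \<Longrightarrow> S \<in> J i \<Longrightarrow> T \<subseteq> S \<Longrightarrow> T \<in> J i"
    and R: "covering K J Y R" and "i \<in> K" "k \<in> K" "i \<noteq> k" "f \<in> R k"
  shows "covering K J Y (R(i := R i - {f}))"
  unfolding covering_def
proof
  show "\<forall>j \<in> K. (R(i := R i - {f})) j \<in> J j"
  proof
    fix j assume "j \<in> K"
    then have "R j \<in> J j" using R unfolding covering_def by blast
    then show "(R(i := R i - {f})) j \<in> J j"
      using down_closed[OF \<open>j \<in> K\<close>, of "R j" "R j - {f}"] by (cases "j = i") auto
  qed
  show "(\<Union>j \<in> K. (R(i := R i - {f})) j) = Y"
  proof
    show "(\<Union>j \<in> K. (R(i := R i - {f})) j) \<subseteq> Y" using R unfolding covering_def by auto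
    show "Y \<subseteq> (\<Union>j \<in> K. (R(i := R i - {f})) j)"
    proof
      fix x assume "x \<in> Y"
      then obtain j where "j \<in> K" "x \<in> R j" using R unfolding covering_def by blast
      then show "x \<in> (\<Union>j \<in> K. (R(i := R i - {f})) j)"
        using assms(3-6) by (cases "j = i \<and> x = f") auto
    qed
  qed
qed

lemma tight_covering_disjoint:
  assumes down_closed: "\<And>i S T. i \<in> K \<Longrightarrow> S \<in> J i \<Longrightarrow> T \<subseteq> S \<Longrightarrow> T \<in> J i"
    and tight: "tight K J Y" and R: "covering K J Y R"
  shows "disjoint_family_on R K"
  unfolding disjoint_family_on_def
proof (intro ballI impI)
  fix i k assume "i \<in> K" "k \<in> K" "i \<noteq> k"
  show "R i \<inter> R k = {}"
  proof (rule ccontr)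
    assume "R i \<inter> R k \<noteq> {}"
    then obtain f where f: "f \<in> R i" "f \<in> R k" by blast
    \<comment> \<open>Tightness applied to the covering without f in R i puts a circuit inside R i.\<close>
    have "covering K J Y (R(i := R i - {f}))"
      by (rule covering_remove_duplicate[OF down_closed R \<open>i \<in> K\<close> \<open>k \<in> K\<close> \<open>i \<noteq> k\<close> f(2)])
    moreover have "f \<in> Y" using R f \<open>i \<in> K\<close> unfolding covering_def by blast
    ultimately have "spans Y (J i) ((R(i := R i - {f})) i) f"
      using tight \<open>i \<in> K\<close> unfolding tight_def by blast
    then obtain C where C: "circuit Y (J i) C" "C \<subseteq> R i"
      using f unfolding spans_def by auto
    have "R i \<in> J i" using R \<open>i \<in> K\<close> unfolding covering_def by blast
    then have "C \<in> J i" by (rule down_closed[OF \<open>i \<in> K\<close> _ C(2)])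
    with C(1) show False unfolding circuit_def by blast
  qed
qed

lemma restr_down_closed:
  assumes "\<forall>i \<in> K. matroid E (Ind i)" and "i \<in> K" "S \<in> restr (Ind i) Y" "T \<subseteq> S"
  shows "T \<in> restr (Ind i) Y"
  using indep_subset[of E "Ind i" S T] assms unfolding restr_def by blast

lemma M_tight_iff_coverings_disjoint:
  assumes M: "\<forall>i \<in> K. matroid E (Ind i)" and "Y \<subseteq> E"
  shows "M_tight K Ind Y \<longleftrightarrow> (\<exists>R. covering K (\<lambda>i. restr (Ind i) Y) Y R) \<and>
    (\<forall>R. covering K (\<lambda>i. restr (Ind i) Y) Y R \<longrightarrow> disjoint_family_on R K)"
    (is "_ \<longleftrightarrow> ?has_covering \<and> ?disjoint")
proof
  assume "M_tight K Ind Y"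
  then have tight: "tight K (\<lambda>i. restr (Ind i) Y) Y" unfolding M_tight_def .
  show "?has_covering \<and> ?disjoint"
  proof (intro conjI allI impI)
    show ?has_covering using tight unfolding tight_def by blast
    fix R assume "covering K (\<lambda>i. restr (Ind i) Y) Y R"
    then show "disjoint_family_on R K"
      by (intro tight_covering_disjoint[OF _ tight]) (rule restr_down_closed[OF M])
  qed
next
  assume "?has_covering \<and> ?disjoint"
  then show "M_tight K Ind Y"
    unfolding M_tight_def tight_def
  proof (intro conjI allI impI ballI)
    fix R i e assume R: "covering K (\<lambda>i. restr (Ind i) Y) Y R" and "i \<in> K" "e \<in> Y"
    have Ri: "R i \<in> Ind i" "R i \<subseteq> Y" using R \<open>i \<in> K\<close> unfolding covering_def restr_def by blast+
    show "spans Y (restr (Ind i) Y) (R i) e"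
    proof (cases "e \<in> R i")
      case True
      then show ?thesis unfolding spans_def by blast
    next
      case False
      obtain k where "k \<in> K" "e \<in> R k" using R \<open>e \<in> Y\<close> unfolding covering_def by blast
      have "insert e (R i) \<notin> Ind i"
      proof
        assume "insert e (R i) \<in> Ind i"
        then have "covering K (\<lambda>i. restr (Ind i) Y) Y (R(i := insert e (R i)))"
          using R Ri(2) \<open>e \<in> Y\<close> \<open>i \<in> K\<close> unfolding covering_def restr_def by auto
        then have "disjoint_family_on (R(i := insert e (R i))) K"
          using \<open>?has_covering \<and> ?disjoint\<close> by blast
        then show False
          using \<open>i \<in> K\<close> \<open>k \<in> K\<close> \<open>e \<in> R k\<close> False unfolding disjoint_family_on_def by fastforce
      qed
      then have "spans Y (Ind i) (R i) e"
        using insert_dependent_imp_spans[OF _ \<open>Y \<subseteq> E\<close> Ri(1)] M \<open>i \<in> K\<close> Ri(2) \<open>e \<in> Y\<close> by blast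
      then show ?thesis unfolding spans_restr .
    qed
  qed (use \<open>?has_covering \<and> ?disjoint\<close> in blast)
qed

lemma M_tight_spans:
  assumes M: "\<forall>i \<in> K. matroid E (Ind i)" and "M_tight K Ind X"
    and S: "covering K (\<lambda>i. restr (Ind i) U) U S" and "X \<subseteq> U" and "j \<in> K" "x \<in> X"
  shows "spans X (Ind j) (S j) x"
proof -
  have "covering K (\<lambda>i. restr (Ind i) X) X (\<lambda>i. S i \<inter> X)"
    by (rule covering_restr[OF M S \<open>X \<subseteq> U\<close>])
  then have "spans X (restr (Ind j) X) (S j \<inter> X) x"
    using \<open>M_tight K Ind X\<close> \<open>j \<in> K\<close> \<open>x \<in> X\<close> unfolding M_tight_def tight_def by blast
  then show ?thesis unfolding spans_restr by (rule spans_mono) blast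
qed

lemma M_tight_Union:
  assumes M: "\<forall>i \<in> K. matroid E (Ind i)" and cover: "covering K Ind E R0"
    and sub: "\<forall>\<alpha> \<in> A. X \<alpha> \<subseteq> E" and tight: "\<forall>\<alpha> \<in> A. M_tight K Ind (X \<alpha>)"
  shows "M_tight K Ind (\<Union>\<alpha> \<in> A. X \<alpha>)"
proof -
  let ?U = "\<Union>\<alpha> \<in> A. X \<alpha>"
  have "?U \<subseteq> E" using sub by blast
  have "covering K (\<lambda>i. restr (Ind i) ?U) ?U (\<lambda>i. R0 i \<inter> ?U)"
    by (rule covering_restr[OF M covering_ground[OF M cover] \<open>?U \<subseteq> E\<close>])
  moreover have "disjoint_family_on R K" if R: "covering K (\<lambda>i. restr (Ind i) ?U) ?U R" for R
    unfolding disjoint_family_on_def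
  proof (intro ballI impI)
    fix i k assume "i \<in> K" "k \<in> K" "i \<noteq> k"
    show "R i \<inter> R k = {}"
    proof (rule ccontr)
      assume "R i \<inter> R k \<noteq> {}"
      then obtain x \<alpha> where "x \<in> R i" "x \<in> R k" "\<alpha> \<in> A" "x \<in> X \<alpha>"
        using R \<open>i \<in> K\<close> unfolding covering_def by blast
      have "X \<alpha> \<subseteq> ?U" using \<open>\<alpha> \<in> A\<close> by blast
      then have "covering K (\<lambda>i. restr (Ind i) (X \<alpha>)) (X \<alpha>) (\<lambda>j. R j \<inter> X \<alpha>)"
        by (rule covering_restr[OF M R])
      then have "disjoint_family_on (\<lambda>j. R j \<inter> X \<alpha>) K"
        using tight \<open>\<alpha> \<in> A\<close> M_tight_iff_coverings_disjoint[OF M] sub by blast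
      then show False
        using \<open>i \<in> K\<close> \<open>k \<in> K\<close> \<open>i \<noteq> k\<close> \<open>x \<in> R i\<close> \<open>x \<in> R k\<close> \<open>x \<in> X \<alpha>\<close>
        unfolding disjoint_family_on_def by blast
    qed
  qed
  ultimately show ?thesis using M_tight_iff_coverings_disjoint[OF M \<open>?U \<subseteq> E\<close>] by blast
qed

lemma covering_extend:
  assumes M: "\<forall>i \<in> K. matroid E (Ind i)" and "Y \<subseteq> U" "U \<subseteq> E"
    and R: "covering K (\<lambda>i. restr (Ind i) Y) Y R" and S: "covering K (\<lambda>i. restr (Ind i) U) U S"
    and base: "\<forall>j \<in> K. max_indep_subset (Ind j) Y (S j \<inter> Y)"
  shows "covering K (\<lambda>i. restr (Ind i) U) U (\<lambda>j. R j \<union> (S j - Y))"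
  unfolding covering_def
proof
  show "\<forall>j \<in> K. R j \<union> (S j - Y) \<in> restr (Ind j) U"
  proof
    fix j assume "j \<in> K"
    have Rj: "R j \<in> Ind j" "R j \<subseteq> Y" and Sj: "S j \<in> Ind j" "S j \<subseteq> U"
      using R S \<open>j \<in> K\<close> unfolding covering_def restr_def by blast+
    have "matroid E (Ind j)" "max_indep_subset (Ind j) Y (S j \<inter> Y)" "Y \<subseteq> E"
      using M base \<open>j \<in> K\<close> \<open>Y \<subseteq> U\<close> \<open>U \<subseteq> E\<close> by blast+
    then have "R j \<union> (S j - Y) \<in> Ind j" using indep_union_diff Sj(1) Rj by blast
    then show "R j \<union> (S j - Y) \<in> restr (Ind j) U"
      using Rj(2) Sj(2) \<open>Y \<subseteq> U\<close> unfolding restr_def by blast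
  qed
  have "(\<Union>j \<in> K. R j) = Y" "(\<Union>j \<in> K. S j) = U" using R S unfolding covering_def by blast+
  then show "(\<Union>j \<in> K. R j \<union> (S j - Y)) = U" using \<open>Y \<subseteq> U\<close> by blast
qed

lemma M_tight_Inter:
  assumes M: "\<forall>i \<in> K. matroid E (Ind i)" and "A \<noteq> {}"
    and sub: "\<forall>\<alpha> \<in> A. X \<alpha> \<subseteq> E" and tight: "\<forall>\<alpha> \<in> A. M_tight K Ind (X \<alpha>)"
    and tight_Union: "M_tight K Ind (\<Union>\<alpha> \<in> A. X \<alpha>)"
  shows "M_tight K Ind (\<Inter>\<alpha> \<in> A. X \<alpha>)"
proof -
  let ?U = "\<Union>\<alpha> \<in> A. X \<alpha>" and ?I = "\<Inter>\<alpha> \<in> A. X \<alpha>"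
  have "?I \<subseteq> ?U" "?U \<subseteq> E" using \<open>A \<noteq> {}\<close> sub by blast+
  obtain S where S: "covering K (\<lambda>i. restr (Ind i) ?U) ?U S"
    using tight_Union unfolding M_tight_def tight_def by blast
  have "max_indep_subset (Ind j) ?I (S j \<inter> ?I)" if "j \<in> K" for j
  proof (rule max_indep_subset_Inter[OF _ _ \<open>A \<noteq> {}\<close> sub])
    show "matroid E (Ind j)" "S j \<in> Ind j"
      using M S \<open>j \<in> K\<close> unfolding covering_def restr_def by blast+
    show "spans (X \<alpha>) (Ind j) (S j) x" if "\<alpha> \<in> A" "x \<in> X \<alpha>" for \<alpha> x
      using M_tight_spans[OF M _ S _ \<open>j \<in> K\<close> \<open>x \<in> X \<alpha>\<close>] tight that by blast
  qed
  then have extend: "covering K (\<lambda>i. restr (Ind i) ?U) ?U (\<lambda>j. R j \<union> (S j - ?I))"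
    if "covering K (\<lambda>i. restr (Ind i) ?I) ?I R" for R
    using covering_extend[OF M \<open>?I \<subseteq> ?U\<close> \<open>?U \<subseteq> E\<close> that S] by blast
  have "covering K (\<lambda>i. restr (Ind i) ?I) ?I (\<lambda>i. S i \<inter> ?I)"
    by (rule covering_restr[OF M S \<open>?I \<subseteq> ?U\<close>])
  moreover have "disjoint_family_on R K" if "covering K (\<lambda>i. restr (Ind i) ?I) ?I R" for R
  proof (rule disjoint_family_on_bisimulation)
    show "disjoint_family_on (\<lambda>j. R j \<union> (S j - ?I)) K"
      using extend[OF that] tight_Union M_tight_iff_coverings_disjoint[OF M \<open>?U \<subseteq> E\<close>] by blast
  qed blast
  ultimately show ?thesis using M_tight_iff_coverings_disjoint[OF M] \<open>?I \<subseteq> ?U\<close> \<open>?U \<subseteq> E\<close> by blast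
qed

theorem proposition3p6:
  fixes E :: "'a set" and K :: "'k set" and Ind :: "'k \<Rightarrow> 'a set set"
    and A :: "'b set" and X :: "'b \<Rightarrow> 'a set"
  assumes matroids: "\<forall>i \<in> K. matroid E (Ind i)"
    and has_cover: "\<exists>R. covering K Ind E R"
    and nonempty: "A \<noteq> {}"
    and subsets: "\<forall>\<alpha> \<in> A. X \<alpha> \<subseteq> E"
    and tight_sets: "\<forall>\<alpha> \<in> A. M_tight K Ind (X \<alpha>)"
  shows "M_tight K Ind (\<Union>\<alpha> \<in> A. X \<alpha>) \<and> M_tight K Ind (\<Inter>\<alpha> \<in> A. X \<alpha>)"
proof -
  obtain R where "covering K Ind E R" using has_cover by blast
  then have "M_tight K Ind (\<Union>\<alpha> \<in> A. X \<alpha>)"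
    by (rule M_tight_Union[OF matroids _ subsets tight_sets])
  moreover from this have "M_tight K Ind (\<Inter>\<alpha> \<in> A. X \<alpha>)"
    by (rule M_tight_Inter[OF matroids nonempty subsets tight_sets])
  ultimately show ?thesis ..
qed

end
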